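(* Let $\nabla:\Omega(A)\to\Omega(A)\otimes_A\Omega(A)$ be a module connection with associated affine connection $(\mathsf K_\nabla,\mathsf H_\nabla)$ and torsion $\mathsf V$. Then $\mathsf V(a)=a$ and $\mathsf V(\mathsf d(a))=\widehat\psi(\widehat\nabla(\mathsf d(a)))$ for all $a\in A$. In particular, if $\widehat\nabla(\mathsf d(a))=0$ for all $a\in A$, then $(\mathsf K_\nabla,\mathsf H_\nabla)$ is torsion-free.
   Context: Fix a commutative ring $R$ and a commutative $R$-algebra $A$; $\Omega(A)$ is the Kähler module of $A$ over $R$ with universal derivation $\mathsf d$, and $\Omega^2(A)=\Omega(A)\wedge_A\Omega(A)$. A module connection on $\Omega(A)$ is an $R$-linear $\nabla:\Omega(A)\to\Omega(A)\otimes_A\Omega(A)$ with $\nabla(a\alpha)=a\nabla(\alpha)+\mathsf d(a)\otimes\alpha$. $\mathsf T(A)=\mathrm{Sym}_A(\Omega(A))$ (which equals the symmetric algebra $\mathsf S_A(\Omega(A))$), $\mathsf T^2(A)=\mathsf T(\mathsf T(A))$ with universal derivation $\mathsf d':\mathsf T(A)\to\mathsf T^2(A)$, generated over $A$ by $\mathsf d(a),\mathsf d'(a),\mathsf d'\mathsf d(a)$; $\mathsf c_A:\mathsf T^2(A)\to\mathsf T^2(A)$ is the algebra map $a\mapsto a$, $\mathsf d(a)\mapsto\mathsf d'(a)$, $\mathsf d'(a)\mapsto\mathsf d(a)$, $\mathsf d'\mathsf d(a)\mapsto\mathsf d'\mathsf d(a)$. The associated affine connection (a tangent category connection on the tangent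 bundle of $A$ in affine schemes) has vertical part the algebra map $\mathsf K_\nabla:\mathsf T(A)\to\mathsf T^2(A)$, $a\mapsto a$, $\mathsf d(a)\mapsto\mathsf d'\mathsf d(a)-U'(\nabla(\mathsf d a))$, and horizontal part $\mathsf H_\nabla:\mathsf T^2(A)\to\mathsf T(A)\otimes_A\mathsf T(A)$ with $\mathsf H_\nabla(\mathsf d'\mathsf d(a))=\nabla(\mathsf d(a))$, where $U':\mathsf T(A)\otimes_A\mathsf T(A)\to\mathsf T^2(A)$ is the algebra map $w\otimes v\mapsto\mathsf T(\mathsf p_A)(w)\,v$ with $\mathsf T(\mathsf p_A)(a)=a$, $\mathsf T(\mathsf p_A)(\mathsf d a)=\mathsf d'(a)$ (so $\mathsf d(b)\otimes\mathsf d(c)\mapsto\mathsf d'(b)\mathsf d(c)$). The torsion of this affine connection (computed from the horizontal connection) is the algebra map $\mathsf V:\mathsf T(A)\to\mathsf T^2(A)$ with $\mathsf V(a)=a$ and $\mathsf V(\mathsf d(a))=\mathsf c_A\big(U'(\mathsf H_\nabla(\mathsf d'\mathsf d a))\big)-U'\big(\mathsf H_\nabla(\mathsf c_A(\mathsf d'\mathsf d a))\big)$; the connection is torsion-free if $\mathsf V(\mathsf d(a))=0$ for all $a\in A$. The torsion of $\nabla$ is $\widehat\nabla=\omega\circ\nabla:\Omega(A)\to\Omega^2(A)$ with $\omega(\alpha\otimes\beta)=\alpha\wedge\beta$. The map $\widehat\psi:\Omega^2(A)\to\mathsf T^2(A)$ is $a\,\mathsf d(b)\wedge\mathsf d(c)\mapsto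 a\,\mathsf d(b)\mathsf d'(c)-a\,\mathsf d'(b)\mathsf d(c)$, extended additively. *)

theory Defs
  imports "HOL-Library.Poly_Mapping"
begin

definition fsmult :: "'a::comm_ring_1 \<Rightarrow> ('k \<Rightarrow>\<^sub>0 'a) \<Rightarrow> ('k \<Rightarrow>\<^sub>0 'a)" where
  "fsmult c u = Poly_Mapping.map (\<lambda>x. c * x) u"

inductive_set mspan :: "('k \<Rightarrow>\<^sub>0 'a::comm_ring_1) set \<Rightarrow> ('k \<Rightarrow>\<^sub>0 'a) set"
  for S where
  mspan_zero: "0 \<in> mspan S"
| mspan_step: "v \<in> S \<Longrightarrow> w \<in> mspan S \<Longrightarrow> fsmult c v + w \<in> mspan S"

type_synonym ('v,'a) pol = "('v \<Rightarrow>\<^sub>0 nat) \<Rightarrow>\<^sub>0 'a"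

definition pconst :: "'a::comm_ring_1 \<Rightarrow> ('v,'a) pol" where
  "pconst c = Poly_Mapping.single 0 c"

definition pvar :: "'v \<Rightarrow> ('v,'a::comm_ring_1) pol" where
  "pvar v = Poly_Mapping.single (Poly_Mapping.single v 1) 1"

definition psubst :: "('v \<Rightarrow> ('w,'a::comm_ring_1) pol) \<Rightarrow> ('v,'a) pol \<Rightarrow> ('w,'a) pol" where
  "psubst f p = (\<Sum>m\<in>Poly_Mapping.keys p.
      pconst (Poly_Mapping.lookup p m) * (\<Prod>v\<in>Poly_Mapping.keys m. f v ^ Poly_Mapping.lookup m v))"

inductive_set gideal :: "'b::comm_ring_1 set \<Rightarrow> 'b set" for G where
  gideal_zero: "0 \<in> gideal G"
| gideal_step: "g \<in> G \<Longrightarrow> x \<in> gideal G \<Longrightarrow> r * g + x \<in> gideal G"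

definition alg_hom_rep :: "(('v,'a::comm_ring_1) pol \<Rightarrow> ('w,'a) pol) \<Rightarrow> bool" where
  "alg_hom_rep f \<longleftrightarrow> (\<forall>p q. f (p + q) = f p + f q) \<and> (\<forall>p q. f (p * q) = f p * f q)
     \<and> (\<forall>c. f (pconst c) = pconst c)"

definition resp_maps :: "('x \<Rightarrow> 'y) \<Rightarrow> ('x \<Rightarrow> 'x \<Rightarrow> bool) \<Rightarrow> ('y \<Rightarrow> 'y \<Rightarrow> bool) \<Rightarrow> bool" where
  "resp_maps f r s \<longleftrightarrow> (\<forall>x y. r x y \<longrightarrow> s (f x) (f y))"

definition ring_hom_map :: "('r::comm_ring_1 \<Rightarrow> 'a::comm_ring_1) \<Rightarrow> bool" where
  "ring_hom_map \<phi> \<longleftrightarrow> \<phi> 1 = 1 \<and> (\<forall>x y. \<phi> (x + y) = \<phi> x + \<phi> y) \<and> (\<forall>x y. \<phi> (x * y) = \<phi> x * \<phi> y)"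

text \<open>Omega(A) over R (structure map phi) = free A-module on symbols d(a) (basis dsym a)
  modulo the submodule KN phi of Kaehler relations.\<close>
definition dsym :: "'a \<Rightarrow> ('a \<Rightarrow>\<^sub>0 'a::comm_ring_1)" where
  "dsym a = Poly_Mapping.single a 1"

definition KN :: "('r::comm_ring_1 \<Rightarrow> 'a::comm_ring_1) \<Rightarrow> ('a \<Rightarrow>\<^sub>0 'a) set" where
  "KN \<phi> = mspan ({dsym (a + b) - dsym a - dsym b | a b. True}
     \<union> {dsym (a * b) - fsmult a (dsym b) - fsmult b (dsym a) | a b. True}
     \<union> {dsym (\<phi> r) | r. True})"

text \<open>Tensor of representatives: (d b) tensor (d c) is the basis symbol (b,c).\<close>
definition ftens :: "('a \<Rightarrow>\<^sub>0 'a::comm_ring_1) \<Rightarrow> ('a \<Rightarrow>\<^sub>0 'a) \<Rightarrow> ('a \<times> 'a \<Rightarrow>\<^sub>0 'a)" where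
  "ftens u v = (\<Sum>b\<in>Poly_Mapping.keys u. \<Sum>c\<in>Poly_Mapping.keys v.
      Poly_Mapping.single (b, c) (Poly_Mapping.lookup u b * Poly_Mapping.lookup v c))"

text \<open>Omega tensor_A Omega = F tensor F modulo (N tensor F + F tensor N).\<close>
definition TN :: "('r::comm_ring_1 \<Rightarrow> 'a::comm_ring_1) \<Rightarrow> ('a \<times> 'a \<Rightarrow>\<^sub>0 'a) set" where
  "TN \<phi> = mspan ({ftens n v | n v. n \<in> KN \<phi>} \<union> {ftens v n | n v. n \<in> KN \<phi>})"

text \<open>Omega^2 = Omega tensor Omega modulo the span of all w tensor w; the wedge map omega
  is the identity on representatives.\<close>
definition WN :: "('r::comm_ring_1 \<Rightarrow> 'a::comm_ring_1) \<Rightarrow> ('a \<times> 'a \<Rightarrow>\<^sub>0 'a) set" where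
  "WN \<phi> = mspan ({ftens n v | n v. n \<in> KN \<phi>} \<union> {ftens v n | n v. n \<in> KN \<phi>}
      \<union> {ftens v v | v. True})"

definition module_connection ::
  "('r::comm_ring_1 \<Rightarrow> 'a::comm_ring_1) \<Rightarrow> (('a \<Rightarrow>\<^sub>0 'a) \<Rightarrow> ('a \<times> 'a \<Rightarrow>\<^sub>0 'a)) \<Rightarrow> bool" where
  "module_connection \<phi> nab \<longleftrightarrow>
     (\<forall>u v. u - v \<in> KN \<phi> \<longrightarrow> nab u - nab v \<in> TN \<phi>)
   \<and> (\<forall>u v. nab (u + v) - nab u - nab v \<in> TN \<phi>)
   \<and> (\<forall>r u. nab (fsmult (\<phi> r) u) - fsmult (\<phi> r) (nab u) \<in> TN \<phi>)
   \<and> (\<forall>a u. nab (fsmult a u) - (fsmult a (nab u) + ftens (dsym a) u) \<in> TN \<phi>)"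

text \<open>T(A) = Sym_A(Omega(A)) = A[x_a : a in A] / J1, with x_a = d(a).\<close>
definition J1 :: "('r::comm_ring_1 \<Rightarrow> 'a::comm_ring_1) \<Rightarrow> ('a,'a) pol set" where
  "J1 \<phi> = gideal ({pvar (a + b) - pvar a - pvar b | a b. True}
     \<union> {pvar (a * b) - pconst a * pvar b - pconst b * pvar a | a b. True}
     \<union> {pvar (\<phi> r) | r. True})"

definition cong1 :: "('r::comm_ring_1 \<Rightarrow> 'a::comm_ring_1) \<Rightarrow> ('a,'a) pol \<Rightarrow> ('a,'a) pol \<Rightarrow> bool" where
  "cong1 \<phi> p q \<longleftrightarrow> p - q \<in> J1 \<phi>"

text \<open>T^2(A) = Sym_{T(A)}(Omega(T(A))): variables Inl a (= d(a), generating T(A)) and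
  Inr t (= d'(t) for a representative t of an element of T(A)); the ideal J2 consists of
  J1 together with the Kaehler relations of T(A) over R.\<close>
type_synonym 'a T2var = "'a + ('a,'a) pol"

definition embL :: "('a,'a::comm_ring_1) pol \<Rightarrow> ('a T2var,'a) pol" where
  "embL p = psubst (\<lambda>a. pvar (Inl a)) p"

definition J2 :: "('r::comm_ring_1 \<Rightarrow> 'a::comm_ring_1) \<Rightarrow> ('a T2var,'a) pol set" where
  "J2 \<phi> = gideal (embL ` J1 \<phi>
     \<union> {pvar (Inr t) - pvar (Inr s) | t s. cong1 \<phi> t s}
     \<union> {pvar (Inr (t + s)) - pvar (Inr t) - pvar (Inr s) | t s. True}
     \<union> {pvar (Inr (t * s)) - embL t * pvar (Inr s) - embL s * pvar (Inr t) | t s. True}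
     \<union> {pvar (Inr (pconst (\<phi> r))) | r. True})"

definition cong2 :: "('r::comm_ring_1 \<Rightarrow> 'a::comm_ring_1) \<Rightarrow> ('a T2var,'a) pol \<Rightarrow> ('a T2var,'a) pol \<Rightarrow> bool" where
  "cong2 \<phi> p q \<longleftrightarrow> p - q \<in> J2 \<phi>"

definition dT2 :: "'a \<Rightarrow> ('a T2var,'a::comm_ring_1) pol" where
  "dT2 a = pvar (Inl a)"
definition d'T2 :: "'a \<Rightarrow> ('a T2var,'a::comm_ring_1) pol" where
  "d'T2 a = pvar (Inr (pconst a))"
definition d'dT2 :: "'a \<Rightarrow> ('a T2var,'a::comm_ring_1) pol" where
  "d'dT2 a = pvar (Inr (pvar a))"

text \<open>T(A) tensor_A T(A) = A[x_a, x'_b] / (J1 on x + J1 on x'): Inl = left, Inr = right factor.\<close>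
definition J3 :: "('r::comm_ring_1 \<Rightarrow> 'a::comm_ring_1) \<Rightarrow> ('a + 'a,'a) pol set" where
  "J3 \<phi> = gideal (psubst (\<lambda>a. pvar (Inl a)) ` J1 \<phi> \<union> psubst (\<lambda>a. pvar (Inr a)) ` J1 \<phi>)"

definition cong3 :: "('r::comm_ring_1 \<Rightarrow> 'a::comm_ring_1) \<Rightarrow> ('a + 'a,'a) pol \<Rightarrow> ('a + 'a,'a) pol \<Rightarrow> bool" where
  "cong3 \<phi> p q \<longleftrightarrow> p - q \<in> J3 \<phi>"

definition tens_emb :: "('a \<times> 'a \<Rightarrow>\<^sub>0 'a::comm_ring_1) \<Rightarrow> ('a + 'a,'a) pol" where
  "tens_emb w = (\<Sum>bc\<in>Poly_Mapping.keys w.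
      pconst (Poly_Mapping.lookup w bc) * pvar (Inl (fst bc)) * pvar (Inr (snd bc)))"

definition psi_hat :: "('a \<times> 'a \<Rightarrow>\<^sub>0 'a::comm_ring_1) \<Rightarrow> ('a T2var,'a) pol" where
  "psi_hat w = (\<Sum>bc\<in>Poly_Mapping.keys w.
      pconst (Poly_Mapping.lookup w bc) *
        (dT2 (fst bc) * d'T2 (snd bc) - d'T2 (fst bc) * dT2 (snd bc)))"

text \<open>Torsion of the affine connection: the A-algebra map V : T(A) to T^2(A) with
  V(a) = a and V(d a) = c(U'(H(d'd a))) - U'(H(c(d'd a))).\<close>
definition torsion_map ::
  "(('a T2var,'a::comm_ring_1) pol \<Rightarrow> ('a T2var,'a) pol) \<Rightarrow> (('a + 'a,'a) pol \<Rightarrow> ('a T2var,'a) pol)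
   \<Rightarrow> (('a T2var,'a) pol \<Rightarrow> ('a + 'a,'a) pol) \<Rightarrow> ('a,'a) pol \<Rightarrow> ('a T2var,'a) pol" where
  "torsion_map cA U H = psubst (\<lambda>a. cA (U (H (d'dT2 a))) - U (H (cA (d'dT2 a))))"

end

theory Submission imports Defs begin

text \<open>
  H_\<nabla> sends d'd(a) to \<nabla>(d a) = \<Sum> w_bc d(b) \<otimes> d(c), and so does H_\<nabla> \<circ> c_A since c_A fixes
  d'd(a). U' turns each d(b) \<otimes> d(c) into d'(b) d(c), and applying c_A afterwards swaps the two
  differentials. Hence the torsion at d(a) is \<Sum> w_bc (d(b) d'(c) - d'(b) d(c)) = \<psi>-hat(\<nabla>(d a)).
  For torsion-freeness, \<psi>-hat has to kill the relations defining \<Omega>^2(A): on w \<otimes> w it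
  vanishes by commutativity, and a Kaehler relation is mapped into the ideal of T^2(A) by both
  d and d'.
\<close>

lemma gideal_gen: "g \<in> G \<Longrightarrow> g \<in> gideal G"
  using gideal_step[of g G 0 1] gideal_zero[of G] by simp

lemma gideal_add: "x \<in> gideal G \<Longrightarrow> y \<in> gideal G \<Longrightarrow> x + y \<in> gideal G"
  by (induction x rule: gideal.induct) (auto simp: add.assoc intro: gideal_step)

lemma gideal_mult_left: "x \<in> gideal G \<Longrightarrow> r * x \<in> gideal G"
proof (induction x rule: gideal.induct)
  case gideal_zero
  then show ?case by (simp add: gideal.gideal_zero)
next
  case (gideal_step g x s)
  have "r * (s * g + x) = (r * s) * g + r * x" by (simp add: algebra_simps)
  then show ?case using gideal_step by (simp add: gideal.gideal_step)
qed

lemma gideal_mult_right: "x \<in> gideal G \<Longrightarrow> x * r \<in> gideal G"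
  using gideal_mult_left[of x G r] by (simp add: mult.commute)

lemma gideal_diff: "x \<in> gideal G \<Longrightarrow> y \<in> gideal G \<Longrightarrow> x - y \<in> gideal G"
  using gideal_add[of x G "-1 * y"] gideal_mult_left[of y G "-1"] by simp

lemma gideal_sum: "(\<And>i. i \<in> I \<Longrightarrow> f i \<in> gideal G) \<Longrightarrow> sum f I \<in> gideal G"
  by (induction I rule: infinite_finite_induct) (auto intro: gideal_add gideal_zero)

lemma cong2_refl: "cong2 \<phi> p p"
  by (simp add: cong2_def J2_def gideal_zero)

lemma cong2_trans: "cong2 \<phi> p q \<Longrightarrow> cong2 \<phi> q r \<Longrightarrow> cong2 \<phi> p r"
  unfolding cong2_def using gideal_add[of "p - q" _ "q - r"] by (simp add: J2_def)

lemma cong2_diff: "cong2 \<phi> p q \<Longrightarrow> cong2 \<phi> p' q' \<Longrightarrow> cong2 \<phi> (p - p') (q - q')"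
  unfolding cong2_def using gideal_diff[of "p - q" _ "p' - q'"] by (simp add: J2_def algebra_simps)

lemma cong2_mult: "cong2 \<phi> p q \<Longrightarrow> cong2 \<phi> p' q' \<Longrightarrow> cong2 \<phi> (p * p') (q * q')"
proof -
  assume "cong2 \<phi> p q" "cong2 \<phi> p' q'"
  then have "p * (p' - q') + (p - q) * q' \<in> J2 \<phi>"
    unfolding cong2_def J2_def by (intro gideal_add gideal_mult_left gideal_mult_right)
  then show ?thesis by (simp add: cong2_def algebra_simps)
qed

lemma cong3_trans: "cong3 \<phi> p q \<Longrightarrow> cong3 \<phi> q r \<Longrightarrow> cong3 \<phi> p r"
  unfolding cong3_def using gideal_add[of "p - q" _ "q - r"] by (simp add: J3_def)

lemma pconst_1 [simp]: "pconst 1 = 1"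
  by (simp add: pconst_def)

lemma pconst_add: "pconst (a + b) = pconst a + pconst b"
  by (simp add: pconst_def single_add)

lemma pconst_mult: "pconst (a * b) = pconst a * pconst b"
  by (simp add: pconst_def mult_single)

lemma lookup_fsmult: "Poly_Mapping.lookup (fsmult c u) k = c * Poly_Mapping.lookup u k"
  unfolding fsmult_def by transfer (simp add: when_def)

lemma keys_fsmult: "Poly_Mapping.keys (fsmult c u) \<subseteq> Poly_Mapping.keys u"
  unfolding fsmult_def by transfer (auto simp: when_def)

definition lincomb :: "('k \<Rightarrow> ('v,'a::comm_ring_1) pol) \<Rightarrow> ('k \<Rightarrow>\<^sub>0 'a) \<Rightarrow> ('v,'a) pol" where
  "lincomb g w = (\<Sum>k\<in>Poly_Mapping.keys w. pconst (Poly_Mapping.lookup w k) * g k)"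

lemma lincomb_superset:
  assumes "finite S" "Poly_Mapping.keys w \<subseteq> S"
  shows "lincomb g w = (\<Sum>k\<in>S. pconst (Poly_Mapping.lookup w k) * g k)"
  unfolding lincomb_def
  by (rule sum.mono_neutral_left) (use assms in \<open>auto simp: in_keys_iff pconst_def\<close>)

lemma lincomb_zero [simp]: "lincomb g 0 = 0"
  by (simp add: lincomb_def)

lemma lincomb_add: "lincomb g (u + w) = lincomb g u + lincomb g w"
proof -
  let ?S = "Poly_Mapping.keys u \<union> Poly_Mapping.keys w"
  have "lincomb g (u + w) = (\<Sum>k\<in>?S. pconst (Poly_Mapping.lookup (u + w) k) * g k)"
    by (rule lincomb_superset) (use keys_add[of u w] in auto)
  also have "\<dots> = (\<Sum>k\<in>?S. pconst (Poly_Mapping.lookup u k) * g k)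
                + (\<Sum>k\<in>?S. pconst (Poly_Mapping.lookup w k) * g k)"
    by (simp add: lookup_add pconst_add distrib_right sum.distrib)
  also have "\<dots> = lincomb g u + lincomb g w"
    by (simp add: lincomb_superset[symmetric])
  finally show ?thesis .
qed

lemma lincomb_diff: "lincomb g (u - w) = lincomb g u - lincomb g w"
  using lincomb_add[of g "u - w" w] by (simp add: algebra_simps)

lemma lincomb_sum: "lincomb g (\<Sum>i\<in>I. h i) = (\<Sum>i\<in>I. lincomb g (h i))"
  by (induction I rule: infinite_finite_induct) (auto simp: lincomb_add)

lemma lincomb_single: "lincomb g (Poly_Mapping.single k c) = pconst c * g k"
  by (simp add: lincomb_def pconst_def)

lemma lincomb_fsmult: "lincomb g (fsmult c u) = pconst c * lincomb g u"
proof -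
  have "lincomb g (fsmult c u)
      = (\<Sum>k\<in>Poly_Mapping.keys u. pconst (Poly_Mapping.lookup (fsmult c u) k) * g k)"
    by (rule lincomb_superset) (use keys_fsmult[of c u] in auto)
  then show ?thesis
    by (simp add: lookup_fsmult pconst_mult lincomb_def sum_distrib_left mult.assoc)
qed

lemma lincomb_diff_fun: "lincomb (\<lambda>k. g k - h k) w = lincomb g w - lincomb h w"
  by (simp add: lincomb_def algebra_simps sum_subtractf)

lemma lincomb_ftens:
  "lincomb (\<lambda>bc. x (fst bc) * y (snd bc)) (ftens u v) = lincomb x u * lincomb y v"
proof -
  have "lincomb (\<lambda>bc. x (fst bc) * y (snd bc)) (ftens u v)
      = (\<Sum>b\<in>Poly_Mapping.keys u. \<Sum>c\<in>Poly_Mapping.keys v.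
           pconst (Poly_Mapping.lookup u b * Poly_Mapping.lookup v c) * (x b * y c))"
    unfolding ftens_def by (simp add: lincomb_sum lincomb_single)
  also have "\<dots> = lincomb x u * lincomb y v"
    unfolding lincomb_def sum_product
    by (intro sum.cong refl) (simp add: pconst_mult ac_simps)
  finally show ?thesis .
qed

lemma lincomb_cong2:
  assumes "\<And>k. cong2 \<phi> (g k) (h k)"
  shows "cong2 \<phi> (lincomb g w) (lincomb h w)"
proof -
  have "(\<Sum>k\<in>Poly_Mapping.keys w. pconst (Poly_Mapping.lookup w k) * (g k - h k)) \<in> J2 \<phi>"
    using assms unfolding cong2_def J2_def by (intro gideal_sum gideal_mult_left)
  then show ?thesis
    by (simp add: cong2_def lincomb_def right_diff_distrib sum_subtractf)
qed

lemma lincomb_mspan_in_gideal: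
  assumes "\<And>v. v \<in> S \<Longrightarrow> lincomb g v \<in> gideal G" and "u \<in> mspan S"
  shows "lincomb g u \<in> gideal G"
  using assms(2)
  by (induction u rule: mspan.induct)
     (auto simp: lincomb_add lincomb_fsmult gideal_zero intro: gideal_add gideal_mult_left assms(1))

lemma tens_emb_lincomb: "tens_emb w = lincomb (\<lambda>bc. pvar (Inl (fst bc)) * pvar (Inr (snd bc))) w"
  by (simp add: tens_emb_def lincomb_def mult.assoc)

lemma psi_hat_lincomb:
  "psi_hat w = lincomb (\<lambda>bc. dT2 (fst bc) * d'T2 (snd bc)) w - lincomb (\<lambda>bc. d'T2 (fst bc) * dT2 (snd bc)) w"
  by (simp add: psi_hat_def lincomb_def right_diff_distrib sum_subtractf)

lemma psi_hat_ftens: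
  "psi_hat (ftens u v) = lincomb dT2 u * lincomb d'T2 v - lincomb d'T2 u * lincomb dT2 v"
  by (simp add: psi_hat_lincomb lincomb_ftens)

lemma alg_hom_rep_0: "alg_hom_rep f \<Longrightarrow> f 0 = 0"
  unfolding alg_hom_rep_def by (metis add_cancel_right_right add_0)

lemma alg_hom_rep_sum: "alg_hom_rep f \<Longrightarrow> f (sum g I) = (\<Sum>i\<in>I. f (g i))"
  by (induction I rule: infinite_finite_induct) (auto simp: alg_hom_rep_def alg_hom_rep_0)

lemma alg_hom_rep_lincomb: "alg_hom_rep f \<Longrightarrow> f (lincomb g w) = lincomb (\<lambda>k. f (g k)) w"
  by (simp add: lincomb_def alg_hom_rep_sum) (simp add: alg_hom_rep_def)

lemma psubst_lincomb:
  "psubst f p = lincomb (\<lambda>m. \<Prod>v\<in>Poly_Mapping.keys m. f v ^ Poly_Mapping.lookup m v) p"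
  unfolding psubst_def lincomb_def ..

lemma psubst_pvar: "psubst f (pvar x) = f x"
  by (simp add: psubst_lincomb pvar_def lincomb_single pconst_def)

lemma psubst_pconst: "psubst f (pconst c) = pconst c"
  by (simp add: psubst_lincomb pconst_def lincomb_single)

lemma psubst_pconst_mult_pvar: "psubst f (pconst c * pvar x) = pconst c * f x"
  by (simp add: psubst_lincomb pconst_def pvar_def lincomb_single mult_single)

lemma psubst_diff: "psubst f (p - q) = psubst f p - psubst f q"
  by (simp add: psubst_lincomb lincomb_diff)

lemma lincomb_dT2_KN:
  assumes "n \<in> KN \<phi>"
  shows "lincomb dT2 n \<in> J2 \<phi>"
proof -
  have "lincomb dT2 v \<in> J2 \<phi>"
    if "v \<in> {dsym (a + b) - dsym a - dsym b | a b. True}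
          \<union> {dsym (a * b) - fsmult a (dsym b) - fsmult b (dsym a) | a b. True}
          \<union> {dsym (\<phi> r) | r. True}" for v
  proof -
    from that have "lincomb dT2 v \<in> embL `
        ({pvar (a + b) - pvar a - pvar b | a b. True}
         \<union> {pvar (a * b) - pconst a * pvar b - pconst b * pvar a | a b. True}
         \<union> {pvar (\<phi> r) | r. True})"
    proof (elim UnE CollectE exE conjE)
      fix a b assume "v = dsym (a + b) - dsym a - dsym b"
      then show ?thesis
        by (intro image_eqI[where x = "pvar (a + b) - pvar a - pvar b"])
           (auto simp: lincomb_diff dsym_def lincomb_single embL_def psubst_diff psubst_pvar dT2_def)
    next
      fix a b assume "v = dsym (a * b) - fsmult a (dsym b) - fsmult b (dsym a)"
      then show ?thesis
        by (intro image_eqI[where x = "pvar (a * b) - pconst a * pvar b - pconst b * pvar a"])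
           (auto simp: lincomb_diff lincomb_fsmult dsym_def lincomb_single embL_def
                       psubst_diff psubst_pvar psubst_pconst_mult_pvar dT2_def)
    next
      fix r assume "v = dsym (\<phi> r)"
      then show ?thesis
        by (intro image_eqI[where x = "pvar (\<phi> r)"])
           (auto simp: dsym_def lincomb_single embL_def psubst_pvar dT2_def)
    qed
    then have "lincomb dT2 v \<in> embL ` J1 \<phi>"
      unfolding J1_def by (blast intro: gideal_gen)
    then show ?thesis unfolding J2_def by (blast intro: gideal_gen)
  qed
  then show ?thesis using assms unfolding KN_def J2_def by (rule lincomb_mspan_in_gideal)
qed

lemma lincomb_d'T2_KN:
  assumes "n \<in> KN \<phi>"
  shows "lincomb d'T2 n \<in> J2 \<phi>"
proof -
  have "lincomb d'T2 v \<in> J2 \<phi>"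
    if "v \<in> {dsym (a + b) - dsym a - dsym b | a b. True}
          \<union> {dsym (a * b) - fsmult a (dsym b) - fsmult b (dsym a) | a b. True}
          \<union> {dsym (\<phi> r) | r. True}" for v
  proof -
    from that have "lincomb d'T2 v
        \<in> {pvar (Inr (t + s)) - pvar (Inr t) - pvar (Inr s) | t s. True}
          \<union> {pvar (Inr (t * s)) - embL t * pvar (Inr s) - embL s * pvar (Inr t) | t s. True}
          \<union> {pvar (Inr (pconst (\<phi> r))) | r. True}"
    proof (elim UnE CollectE exE conjE)
      fix a b assume "v = dsym (a + b) - dsym a - dsym b"
      then have "lincomb d'T2 v = pvar (Inr (pconst a + pconst b)) - pvar (Inr (pconst a)) - pvar (Inr (pconst b))"
        by (simp add: lincomb_diff dsym_def lincomb_single d'T2_def pconst_add)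
      then show ?thesis by blast
    next
      fix a b assume "v = dsym (a * b) - fsmult a (dsym b) - fsmult b (dsym a)"
      then have "lincomb d'T2 v = pvar (Inr (pconst a * pconst b))
          - embL (pconst a) * pvar (Inr (pconst b)) - embL (pconst b) * pvar (Inr (pconst a))"
        by (simp add: lincomb_diff lincomb_fsmult dsym_def lincomb_single d'T2_def pconst_mult
                      embL_def psubst_pconst)
      then show ?thesis by blast
    next
      fix r assume "v = dsym (\<phi> r)"
      then have "lincomb d'T2 v = pvar (Inr (pconst (\<phi> r)))"
        by (simp add: dsym_def lincomb_single d'T2_def)
      then show ?thesis by blast
    qed
    then show ?thesis unfolding J2_def by (blast intro: gideal_gen)
  qed
  then show ?thesis using assms unfolding KN_def J2_def by (rule lincomb_mspan_in_gideal)
qed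

lemma psi_hat_WN:
  assumes "w \<in> WN \<phi>"
  shows "psi_hat w \<in> J2 \<phi>"
proof -
  have "psi_hat v \<in> J2 \<phi>"
    if "v \<in> {ftens n u | n u. n \<in> KN \<phi>} \<union> {ftens u n | n u. n \<in> KN \<phi>} \<union> {ftens u u | u. True}" for v
    using that
  proof (elim UnE CollectE exE conjE)
    fix n u assume v: "v = ftens n u" and n: "n \<in> KN \<phi>"
    show ?thesis
      unfolding v psi_hat_ftens
      using lincomb_dT2_KN[OF n] lincomb_d'T2_KN[OF n] unfolding J2_def
      by (intro gideal_diff gideal_mult_right)
  next
    fix n u assume v: "v = ftens u n" and n: "n \<in> KN \<phi>"
    show ?thesis
      unfolding v psi_hat_ftens
      using lincomb_dT2_KN[OF n] lincomb_d'T2_KN[OF n] unfolding J2_def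
      by (intro gideal_diff gideal_mult_left)
  next
    fix u assume "v = ftens u u"
    then show ?thesis by (simp add: psi_hat_ftens mult.commute J2_def gideal_zero)
  qed
  then show ?thesis
    using assms unfolding WN_def J2_def psi_hat_lincomb lincomb_diff_fun[symmetric]
    by (rule lincomb_mspan_in_gideal[unfolded lincomb_diff_fun])
qed

lemma torsion_map_pconst: "torsion_map cA U H (pconst a) = pconst a"
  unfolding torsion_map_def by (rule psubst_pconst)

lemma torsion_map_pvar_cong_psi_hat:
  assumes cA_hom: "alg_hom_rep cA" and cA_wd: "resp_maps cA (cong2 \<phi>) (cong2 \<phi>)"
    and cA_d: "\<And>a. cong2 \<phi> (cA (dT2 a)) (d'T2 a)"
    and cA_d': "\<And>a. cong2 \<phi> (cA (d'T2 a)) (dT2 a)"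
    and cA_d'd: "\<And>a. cong2 \<phi> (cA (d'dT2 a)) (d'dT2 a)"
    and U_hom: "alg_hom_rep U" and U_wd: "resp_maps U (cong3 \<phi>) (cong2 \<phi>)"
    and U_l: "\<And>a. cong2 \<phi> (U (pvar (Inl a))) (d'T2 a)"
    and U_r: "\<And>a. cong2 \<phi> (U (pvar (Inr a))) (dT2 a)"
    and H_wd: "resp_maps H (cong2 \<phi>) (cong3 \<phi>)"
    and H_d'd: "\<And>a. cong3 \<phi> (H (d'dT2 a)) (tens_emb (nab (dsym a)))"
  shows "cong2 \<phi> (torsion_map cA U H (pvar a)) (psi_hat (nab (dsym a)))"
proof -
  define w where "w = nab (dsym a)"
  define P where "P = lincomb (\<lambda>bc. d'T2 (fst bc) * dT2 (snd bc)) w"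
  define Q where "Q = lincomb (\<lambda>bc. dT2 (fst bc) * d'T2 (snd bc)) w"
  have H1: "cong3 \<phi> (H (d'dT2 a)) (tens_emb w)"
    unfolding w_def by (rule H_d'd)
  have H2: "cong3 \<phi> (H (cA (d'dT2 a))) (tens_emb w)"
    using H_wd cA_d'd H1 unfolding resp_maps_def by (blast intro: cong3_trans)
  have UT: "cong2 \<phi> (U (tens_emb w)) P"
    unfolding tens_emb_lincomb alg_hom_rep_lincomb[OF U_hom] P_def
    using U_hom by (auto simp: alg_hom_rep_def intro!: lincomb_cong2 cong2_mult U_l U_r)
  have cAP: "cong2 \<phi> (cA P) Q"
    unfolding P_def Q_def alg_hom_rep_lincomb[OF cA_hom]
    using cA_hom by (auto simp: alg_hom_rep_def intro!: lincomb_cong2 cong2_mult cA_d cA_d')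
  have "cong2 \<phi> (cA (U (H (d'dT2 a)))) Q"
    using U_wd cA_wd H1 UT cAP unfolding resp_maps_def by (blast intro: cong2_trans)
  moreover have "cong2 \<phi> (U (H (cA (d'dT2 a)))) P"
    using U_wd H2 UT unfolding resp_maps_def by (blast intro: cong2_trans)
  ultimately have "cong2 \<phi> (torsion_map cA U H (pvar a)) (Q - P)"
    unfolding torsion_map_def psubst_pvar by (rule cong2_diff)
  then show ?thesis
    by (simp add: P_def Q_def w_def psi_hat_lincomb)
qed

text \<open>Only the values of c_A, U' and H_\<nabla> on generators and their compatibility with the
  congruences enter.\<close>

theorem mainTheorem13:
  fixes \<phi> :: "'r::comm_ring_1 \<Rightarrow> 'a::comm_ring_1"
    and nab :: "('a \<Rightarrow>\<^sub>0 'a) \<Rightarrow> ('a \<times> 'a \<Rightarrow>\<^sub>0 'a)"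
    and cA :: "('a T2var,'a) pol \<Rightarrow> ('a T2var,'a) pol"
    and U :: "('a + 'a,'a) pol \<Rightarrow> ('a T2var,'a) pol"
    and H :: "('a T2var,'a) pol \<Rightarrow> ('a + 'a,'a) pol"
  assumes hom: "ring_hom_map \<phi>"
    and conn: "module_connection \<phi> nab"
    and cA_hom: "alg_hom_rep cA" and cA_wd: "resp_maps cA (cong2 \<phi>) (cong2 \<phi>)"
    and cA_d: "\<And>a. cong2 \<phi> (cA (dT2 a)) (d'T2 a)"
    and cA_d': "\<And>a. cong2 \<phi> (cA (d'T2 a)) (dT2 a)"
    and cA_d'd: "\<And>a. cong2 \<phi> (cA (d'dT2 a)) (d'dT2 a)"
    and U_hom: "alg_hom_rep U" and U_wd: "resp_maps U (cong3 \<phi>) (cong2 \<phi>)"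
    and U_l: "\<And>a. cong2 \<phi> (U (pvar (Inl a))) (d'T2 a)"
    and U_r: "\<And>a. cong2 \<phi> (U (pvar (Inr a))) (dT2 a)"
    and H_hom: "alg_hom_rep H" and H_wd: "resp_maps H (cong2 \<phi>) (cong3 \<phi>)"
    and H_d'd: "\<And>a. cong3 \<phi> (H (d'dT2 a)) (tens_emb (nab (dsym a)))"
  shows "(\<forall>a. cong2 \<phi> (torsion_map cA U H (pconst a)) (pconst a)
            \<and> cong2 \<phi> (torsion_map cA U H (pvar a)) (psi_hat (nab (dsym a))))
       \<and> ((\<forall>a. nab (dsym a) \<in> WN \<phi>) \<longrightarrow> (\<forall>a. cong2 \<phi> (torsion_map cA U H (pvar a)) 0))"
proof -
  have torsion_d: "cong2 \<phi> (torsion_map cA U H (pvar a)) (psi_hat (nab (dsym a)))" for a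
    by (rule torsion_map_pvar_cong_psi_hat[OF cA_hom cA_wd cA_d cA_d' cA_d'd U_hom U_wd U_l U_r H_wd H_d'd])
  moreover have "cong2 \<phi> (psi_hat (nab (dsym a))) 0" if "nab (dsym a) \<in> WN \<phi>" for a
    using psi_hat_WN[OF that] by (simp add: cong2_def)
  ultimately show ?thesis
    by (auto simp: torsion_map_pconst cong2_refl intro: cong2_trans)
qed

end
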